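(* Let $\mathbb{F}$ be an algebraically closed field of characteristic zero and $J_2=E_{12}+E_{23}$. Let $\underline{A}=(J_2,A_2,A_3)$ and $\underline{B}=(J_2,B_2,B_3)$ be elements of $\mathcal{N}_3^3$ such that $f(\underline{A})=f(\underline{B})$ for all $f\in S_{3,3}$. Then $f(\underline{A})=f(\underline{B})$ for all $f\in P_{3,3}$.
   Context: $E_{ij}$ is the $3\times3$ matrix unit. $\mathcal{N}_3^3$ is the set of triples of nilpotent $3\times3$ matrices over $\mathbb{F}$. $\mathrm{tr}(Y_{i_1}\cdots Y_{i_r})$ denotes the function $\underline{A}\mapsto\mathrm{tr}(A_{i_1}\cdots A_{i_r})$. $S_{3,3}$ is the set consisting of: $\mathrm{tr}(Y_iY_j),\ \mathrm{tr}(Y_i^2Y_j),\ \mathrm{tr}(Y_iY_j^2),\ \mathrm{tr}(Y_i^2Y_j^2),\ \mathrm{tr}(Y_i^2Y_j^2Y_iY_j)$ for $1\le i<j\le3$; $\mathrm{tr}(Y_1Y_2Y_3)$, $\mathrm{tr}(Y_1Y_3Y_2)$; $\mathrm{tr}(Y_i^2Y_jY_k)$ for $\{i,j,k\}=\{1,2,3\}$; $\mathrm{tr}(Y_1^2Y_2Y_1Y_3)$, $\mathrm{tr}(Y_2^2Y_1Y_2Y_3)$, $\mathrm{tr}(Y_3^2Y_1Y_3Y_2)$. $P_{3,3}=S_{3,3}\sqcup P'_{3,3}$, where $P'_{3,3}$ consists of $\mathrm{tr}(Y_i^2Y_j^2Y_k)$ and $\mathrm{tr}(Y_i^2Y_j^2Y_iY_k)$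 for $\{i,j,k\}=\{1,2,3\}$, and $\mathrm{tr}(Y_1^2Y_2^2Y_3^2)$. *)

theory Defs
  imports "HOL-Analysis.Analysis" "HOL-Computational_Algebra.Polynomial"
begin

text \<open>3x3 matrices over a field are modelled as 'a^3^3 (HOL-Analysis).
  The paper's row/column indices 1,2,3 are mapped to the elements 0,1,2 of the
  numeral type 3 by idx3.\<close>

definition idx3 :: "nat \<Rightarrow> 3" where
  "idx3 k = of_nat (k - 1)"

definition matunit :: "nat \<Rightarrow> nat \<Rightarrow> 'a::semiring_1^3^3" where
  "matunit i j = (\<chi> r c. if r = idx3 i \<and> c = idx3 j then 1 else 0)"

primrec matpow :: "'a::semiring_1^'n^'n \<Rightarrow> nat \<Rightarrow> 'a^'n^'n" where
  "matpow A 0 = mat 1"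
| "matpow A (Suc k) = A ** matpow A k"

definition nilpotent_mat :: "'a::semiring_1^'n^'n \<Rightarrow> bool" where
  "nilpotent_mat A \<longleftrightarrow> (\<exists>k. matpow A k = 0)"

definition triple :: "'m \<Rightarrow> 'm \<Rightarrow> 'm \<Rightarrow> nat \<Rightarrow> 'm" where
  "triple X Y Z i = (if i = 1 then X else if i = 2 then Y else Z)"

text \<open>tr(Y_{i_1} ... Y_{i_r}) evaluated at a tuple: word given as list [i_1,...,i_r].\<close>
definition trword :: "(nat \<Rightarrow> 'a::semiring_1^'n^'n) \<Rightarrow> nat list \<Rightarrow> 'a" where
  "trword Y w = trace (foldr (\<lambda>i M. Y i ** M) w (mat 1))"

definition S33 :: "nat list set" where
  "S33 =
     {w. \<exists>i j. 1 \<le> i \<and> i < j \<and> j \<le> 3 \<and>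
          (w = [i,j] \<or> w = [i,i,j] \<or> w = [i,j,j] \<or> w = [i,i,j,j] \<or> w = [i,i,j,j,i,j])}
   \<union> {[1,2,3], [1,3,2]}
   \<union> {w. \<exists>i j k. {i,j,k} = {1,2,3::nat} \<and> w = [i,i,j,k]}
   \<union> {[1,1,2,1,3], [2,2,1,2,3], [3,3,1,3,2]}"

definition P33' :: "nat list set" where
  "P33' =
     {w. \<exists>i j k. {i,j,k} = {1,2,3::nat} \<and> (w = [i,i,j,j,k] \<or> w = [i,i,j,j,i,k])}
   \<union> {[1,1,2,2,3,3]}"

definition P33 :: "nat list set" where
  "P33 = S33 \<union> P33'"

end

(*
  The matrices I + bJ + cJ^2 commute with J, so conjugating a triple (J, Y2, Y3) by one of
  them changes no trace function; and tr(J^2 Y) is the (3,1) entry of Y, so the functions in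
  S33 see which of the following cases occurs.  In the first two cases a conjugation brings
  the triple to a normal form that is determined by its S33 values, so the two triples are
  conjugate and all their trace functions agree.
  - The (3,1) entry of Y2 or of Y3 is nonzero: that matrix can be made to have zero (1,1)
    and (3,2) entries.
  - Both (3,1) entries vanish and Y2 or Y3 has nonzero (2,1) and (3,2) entries p and q: it
    can be made to have zero (1,1) and (2,3) entries.  When p^2 - pq + q^2 = 0 the linear
    equations for the diagonal of the other matrix degenerate, and further S33 functions are
    needed.
  - Otherwise each of Y2, Y3 annihilates e1 or has zero last row, in both triples, and every
    function in P'33 vanishes on both.
*)

theory Submission
  imports Defs
begin

section \<open>Explicit 3x3 matrices\<close>

(* The entries are listed row by row: the paper's entry (i,j) is X $ (i - 1) $ (j - 1). *)
definition mat3 :: "'a \<Rightarrow> 'a \<Rightarrow> 'a \<Rightarrow> 'a \<Rightarrow> 'a \<Rightarrow> 'a \<Rightarrow> 'a \<Rightarrow> 'a \<Rightarrow> 'a \<Rightarrow> 'a^3^3" where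
  "mat3 a11 a12 a13 a21 a22 a23 a31 a32 a33 =
     (\<chi> r s. if r = 0 then (if s = 0 then a11 else if s = 1 then a12 else a13)
       else if r = 1 then (if s = 0 then a21 else if s = 1 then a22 else a23)
       else (if s = 0 then a31 else if s = 1 then a32 else a33))"

lemma UNIV_3_eq: "(UNIV::3 set) = {0, 1, 2}"
  unfolding UNIV_3 by auto

lemma sum_UNIV_3: "sum f (UNIV::3 set) = f 0 + f 1 + f 2"
  unfolding UNIV_3_eq by (simp add: add.assoc)

lemma forall_UNIV_3: "(\<forall>i::3. P i) \<longleftrightarrow> P 0 \<and> P 1 \<and> P 2"
  by (metis UNIV_3_eq UNIV_I insertE singletonD)

lemma mat3_nth [simp]:
  "mat3 a11 a12 a13 a21 a22 a23 a31 a32 a33 $ 0 $ 0 = a11"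
  "mat3 a11 a12 a13 a21 a22 a23 a31 a32 a33 $ 0 $ 1 = a12"
  "mat3 a11 a12 a13 a21 a22 a23 a31 a32 a33 $ 0 $ 2 = a13"
  "mat3 a11 a12 a13 a21 a22 a23 a31 a32 a33 $ 1 $ 0 = a21"
  "mat3 a11 a12 a13 a21 a22 a23 a31 a32 a33 $ 1 $ 1 = a22"
  "mat3 a11 a12 a13 a21 a22 a23 a31 a32 a33 $ 1 $ 2 = a23"
  "mat3 a11 a12 a13 a21 a22 a23 a31 a32 a33 $ 2 $ 0 = a31"
  "mat3 a11 a12 a13 a21 a22 a23 a31 a32 a33 $ 2 $ 1 = a32"
  "mat3 a11 a12 a13 a21 a22 a23 a31 a32 a33 $ 2 $ 2 = a33"
  unfolding mat3_def by simp_all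

lemma mat3_cases:
  obtains a11 a12 a13 a21 a22 a23 a31 a32 a33
  where "X = mat3 a11 a12 a13 a21 a22 a23 a31 a32 a33"
proof
  show "X = mat3 (X$0$0) (X$0$1) (X$0$2) (X$1$0) (X$1$1) (X$1$2) (X$2$0) (X$2$1) (X$2$2)"
    unfolding mat3_def vec_eq_iff forall_UNIV_3 by simp
qed

lemma mat3_eq_iff:
  "mat3 a11 a12 a13 a21 a22 a23 a31 a32 a33 = mat3 b11 b12 b13 b21 b22 b23 b31 b32 b33 \<longleftrightarrow>
   a11 = b11 \<and> a12 = b12 \<and> a13 = b13 \<and> a21 = b21 \<and> a22 = b22 \<and> a23 = b23 \<and>
   a31 = b31 \<and> a32 = b32 \<and> a33 = b33"
  unfolding mat3_def vec_eq_iff forall_UNIV_3 by simp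

lemma mat3_mult:
  "mat3 a11 a12 a13 a21 a22 a23 a31 a32 a33 ** mat3 b11 b12 b13 b21 b22 b23 b31 b32 b33 =
   mat3 (a11*b11 + a12*b21 + a13*b31) (a11*b12 + a12*b22 + a13*b32) (a11*b13 + a12*b23 + a13*b33)
        (a21*b11 + a22*b21 + a23*b31) (a21*b12 + a22*b22 + a23*b32) (a21*b13 + a22*b23 + a23*b33)
        (a31*b11 + a32*b21 + a33*b31) (a31*b12 + a32*b22 + a33*b32) (a31*b13 + a32*b23 + a33*b33)"
  unfolding matrix_matrix_mult_def mat3_def vec_eq_iff forall_UNIV_3 by (simp add: sum_UNIV_3)

lemma mat3_diff:
  "mat3 a11 a12 a13 a21 a22 a23 a31 a32 a33 - mat3 b11 b12 b13 b21 b22 b23 b31 b32 b33 =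
   (mat3 (a11 - b11) (a12 - b12) (a13 - b13) (a21 - b21) (a22 - b22) (a23 - b23)
     (a31 - b31) (a32 - b32) (a33 - b33) :: 'a::ab_group_add^3^3)"
  unfolding mat3_def vec_eq_iff forall_UNIV_3 by simp

lemma mat_eq_mat3: "(mat x :: 'a::semiring_1^3^3) = mat3 x 0 0 0 x 0 0 0 x"
  unfolding mat_def mat3_def vec_eq_iff forall_UNIV_3 by simp

lemma trace_mat3: "trace (mat3 a11 a12 a13 a21 a22 a23 a31 a32 a33) = a11 + a22 + a33"
  unfolding trace_def mat3_def by (simp add: sum_UNIV_3)

lemma det_mat3:
  "det (mat3 a11 a12 a13 a21 a22 a23 a31 a32 a33 :: 'a::comm_ring_1^3^3) =
   a11*a22*a33 + a12*a23*a31 + a13*a21*a32 - a11*a23*a32 - a12*a21*a33 - a13*a22*a31"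
  unfolding det_3 mat3_def by (simp add: algebra_simps)

definition jordan3 :: "'a::semiring_1^3^3" where
  "jordan3 = mat3 0 1 0 0 0 1 0 0 0"

lemma matunit_12_plus_23: "matunit 1 2 + matunit 2 3 = jordan3"
  unfolding matunit_def jordan3_def mat3_def idx3_def vec_eq_iff forall_UNIV_3 by simp

lemma triple_simps [simp]: "triple X Y Z 1 = X" "triple X Y Z 2 = Y" "triple X Y Z 3 = Z"
  unfolding triple_def by simp_all

lemmas trword_mat3_expand =
  trword_def foldr.simps comp_apply id_apply triple_simps jordan3_def mat3_mult mat_eq_mat3 trace_mat3

section \<open>Nilpotent 3x3 matrices\<close>

lemma det_matpow: "det (matpow (A::'a::comm_ring_1^'n^'n) k) = det A ^ k"
  by (induct k) (simp_all add: det_mul det_I)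

lemma nilpotent_mat_det:
  assumes "nilpotent_mat (A::'a::field^'n^'n)"
  shows "det A = 0"
proof -
  obtain k where k: "matpow A k = 0"
    using assms unfolding nilpotent_mat_def by blast
  have "k \<noteq> 0"
  proof
    assume "k = 0"
    then have "(mat 1 :: 'a^'n^'n) $ i $ i = 0 $ i $ i" for i
      using k by simp
    then show False
      by (simp add: mat_def)
  qed
  moreover have "det A ^ k = 0"
    using k det_matpow[of A k] det_0 by (metis mat_0)
  ultimately show ?thesis
    by simp
qed

lemma nilpotent_mat_eigenvalue:
  assumes "nilpotent_mat (A::'a::field^'n^'n)" and "det (mat l - A) = 0"
  shows "l = 0"
proof -
  obtain k where k: "matpow A k = 0"
    using assms(1) unfolding nilpotent_mat_def by blast
  have "\<not> invertible (mat l - A)"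
    using assms(2) invertible_det_nz by blast
  then obtain v where v: "(mat l - A) *v v = 0" "v \<noteq> 0"
    using invertible_left_inverse matrix_left_invertible_ker by blast
  have "mat l *v v = l *s v"
    by (simp add: vec_eq_iff matrix_vector_mult_def mat_def if_distrib[where f="\<lambda>x. x * _"] cong: if_cong)
  then have Av: "A *v v = l *s v"
    using v(1) by (simp add: matrix_vector_mult_diff_rdistrib)
  have "matpow A n *v v = l ^ n *s v" for n
    by (induct n) (simp_all add: matrix_vector_mul_assoc[symmetric] vector_scalar_commute Av)
  then have "l ^ k *s v = 0"
    using k by (metis matrix_vector_mult_0)
  then show ?thesis
    using v(2) by simp
qed

(* In characteristic 0 these say that the characteristic polynomial is t^3. *)
definition nilpotent_invariants :: "'a::comm_ring_1^3^3 \<Rightarrow> bool" where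
  "nilpotent_invariants X \<longleftrightarrow> trace X = 0 \<and> trace (X ** X) = 0 \<and> det X = 0"

lemma nilpotent_invariants_mat3:
  "nilpotent_invariants (mat3 a11 a12 a13 a21 a22 a23 a31 a32 a33 :: 'a::comm_ring_1^3^3) \<longleftrightarrow>
   a11 + a22 + a33 = 0 \<and>
   a11*a11 + a22*a22 + a33*a33 + 2*(a12*a21 + a13*a31 + a23*a32) = 0 \<and>
   a11*a22*a33 + a12*a23*a31 + a13*a21*a32 - a11*a23*a32 - a12*a21*a33 - a13*a22*a31 = 0"
proof -
  have "trace (mat3 a11 a12 a13 a21 a22 a23 a31 a32 a33 ** mat3 a11 a12 a13 a21 a22 a23 a31 a32 a33) =
     a11*a11 + a22*a22 + a33*a33 + 2*(a12*a21 + a13*a31 + a23*a32)"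
    unfolding mat3_mult trace_mat3 by (simp add: algebra_simps)
  then show ?thesis
    unfolding nilpotent_invariants_def trace_mat3 det_mat3 by simp
qed

lemma quadratic_has_root: "\<exists>x::'a::alg_closed_field. x*x - t*x + q = 0"
proof -
  obtain x :: 'a where "poly [:q, -t, 1:] x = 0"
    using alg_closed_imp_poly_has_root[of "[:q, -t, 1:]"] by auto
  then have "x*x - t*x + q = 0"
    by (simp add: algebra_simps)
  then show ?thesis ..
qed

lemma nilpotent_mat_invariants:
  assumes "nilpotent_mat (A::'a::alg_closed_field^3^3)"
  shows "nilpotent_invariants A"
proof -
  obtain a11 a12 a13 a21 a22 a23 a31 a32 a33 where A: "A = mat3 a11 a12 a13 a21 a22 a23 a31 a32 a33"
    by (rule mat3_cases)
  define t where "t = a11 + a22 + a33"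
  define q where "q = a11*a22 - a12*a21 + a11*a33 - a13*a31 + a22*a33 - a23*a32"
  define d where "d = a11*a22*a33 + a12*a23*a31 + a13*a21*a32 - a11*a23*a32 - a12*a21*a33 - a13*a22*a31"
  have char_poly: "det (mat l - A) = l*l*l - t*l*l + q*l - d" for l
    unfolding A mat_eq_mat3 mat3_diff det_mat3 t_def q_def d_def by (simp add: algebra_simps)
  have d: "d = 0"
    using nilpotent_mat_det[OF assms] unfolding A det_mat3 d_def .
  have root: "l = 0" if "l*l*l - t*l*l + q*l = 0" for l
    by (rule nilpotent_mat_eigenvalue[OF assms]) (simp add: char_poly d that)
  (* The characteristic polynomial is l (l^2 - t l + q), and its only root is 0. *)
  obtain x where x: "x*x - t*x + q = 0"
    using quadratic_has_root by blast
  then have "x*x*x - t*x*x + q*x = 0"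
    by algebra
  then have "x = 0"
    by (rule root)
  then have q: "q = 0"
    using x by simp
  then have "t*t*t - t*t*t + q*t = 0"
    by simp
  then have t: "t = 0"
    by (rule root)
  have "a11*a11 + a22*a22 + a33*a33 + 2*(a12*a21 + a13*a31 + a23*a32) = t*t - 2*q"
    unfolding t_def q_def by (simp add: algebra_simps)
  with t q d show ?thesis
    unfolding A nilpotent_invariants_mat3 t_def d_def by simp
qed

section \<open>Conjugation by the centralizer of J\<close>

(* I + bJ + cJ^2, an element of the centralizer of J *)
definition jordan_unip :: "'a::comm_ring_1 \<Rightarrow> 'a \<Rightarrow> 'a^3^3" where
  "jordan_unip b c = mat3 1 b c 0 1 b 0 0 1"

definition unip_conj :: "'a::comm_ring_1 \<Rightarrow> 'a \<Rightarrow> 'a^3^3 \<Rightarrow> 'a^3^3" where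
  "unip_conj b c X = jordan_unip b c ** X ** jordan_unip (- b) (b*b - c)"

lemma jordan_unip_inverse:
  "jordan_unip b c ** jordan_unip (- b) (b*b - c) = mat 1"
  "jordan_unip (- b) (b*b - c) ** jordan_unip b c = mat 1"
  unfolding jordan_unip_def mat3_mult mat_eq_mat3 mat3_eq_iff by (simp_all add: algebra_simps)

lemma unip_conj_jordan3: "unip_conj b c jordan3 = jordan3"
  unfolding unip_conj_def jordan_unip_def jordan3_def mat3_mult mat3_eq_iff by (simp add: algebra_simps)

lemma unip_conj_one: "unip_conj b c (mat 1) = mat 1"
  unfolding unip_conj_def by (simp add: jordan_unip_inverse)

lemma unip_conj_mult: "unip_conj b c X ** unip_conj b c Y = unip_conj b c (X ** Y)"
proof -
  have "unip_conj b c X ** unip_conj b c Y =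
    jordan_unip b c ** X ** (jordan_unip (- b) (b*b - c) ** jordan_unip b c) ** Y ** jordan_unip (- b) (b*b - c)"
    unfolding unip_conj_def by (simp add: matrix_mul_assoc)
  then show ?thesis
    unfolding unip_conj_def by (simp add: jordan_unip_inverse matrix_mul_assoc)
qed

lemma trace_unip_conj: "trace (unip_conj b c X) = trace X"
  unfolding unip_conj_def by (metis matrix_mul_assoc matrix_mul_lid jordan_unip_inverse(2) trace_mul_sym)

lemma det_unip_conj: "det (unip_conj b c X) = det X"
proof -
  have "det (jordan_unip b c) = 1" for b c :: 'a
    unfolding jordan_unip_def det_mat3 by simp
  then show ?thesis
    unfolding unip_conj_def by (simp add: det_mul)
qed

lemma nilpotent_invariants_unip_conj:
  "nilpotent_invariants (unip_conj b c X) \<longleftrightarrow> nilpotent_invariants X"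
  unfolding nilpotent_invariants_def by (simp add: trace_unip_conj det_unip_conj unip_conj_mult)

lemma trword_unip_conj: "trword (\<lambda>i. unip_conj b c (Y i)) w = trword Y w"
proof -
  have "foldr (\<lambda>i M. unip_conj b c (Y i) ** M) w (mat 1) = unip_conj b c (foldr (\<lambda>i M. Y i ** M) w (mat 1))"
    by (induct w) (simp_all add: unip_conj_one unip_conj_mult)
  then show ?thesis
    unfolding trword_def by (simp add: trace_unip_conj)
qed

lemma triple_unip_conj:
  "triple jordan3 (unip_conj b c A) (unip_conj b c C) = (\<lambda>i. unip_conj b c (triple jordan3 A C i))"
  unfolding triple_def by (auto simp: unip_conj_jordan3)

lemma unip_conj_mat3:
  "unip_conj b c (mat3 a11 a12 a13 a21 a22 a23 a31 a32 a33) =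
   mat3 (a11 + a21*b + a31*c) (- a11*b + a12 - a21*b*b + a22*b - a31*b*c + a32*c)
        (a11*b*b - a11*c - a12*b + a13 - a21*b*c + a21*b*b*b - a22*b*b + a23*b + a31*b*b*c - a31*c*c - a32*b*c + a33*c)
        (a21 + a31*b) (- a21*b + a22 - a31*b*b + a32*b)
        (a21*b*b - a21*c - a22*b + a23 - a31*b*c + a31*b*b*b - a32*b*b + a33*b)
        a31 (- a31*b + a32) (a31*b*b - a31*c - a32*b + a33)"
  unfolding unip_conj_def jordan_unip_def mat3_mult mat3_eq_iff by (simp add: algebra_simps)

lemma unip_conj_nth_20 [simp]: "unip_conj b c X $ 2 $ 0 = X $ 2 $ 0"
  by (cases X rule: mat3_cases) (simp add: unip_conj_mat3)

lemma unip_conj_subdiagonal: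
  assumes "X $ 2 $ 0 = 0"
  shows "unip_conj b c X $ 1 $ 0 = X $ 1 $ 0" "unip_conj b c X $ 2 $ 1 = X $ 2 $ 1"
  using assms by (cases X rule: mat3_cases; simp add: unip_conj_mat3)+

lemma unip_conj_corner_normal_form:
  fixes X :: "'a::field^3^3"
  assumes "X $ 2 $ 0 \<noteq> 0"
  obtains b c where "unip_conj b c X $ 0 $ 0 = 0" "unip_conj b c X $ 2 $ 1 = 0"
proof (cases X rule: mat3_cases)
  case (1 a11 a12 a13 a21 a22 a23 a31 a32 a33)
  define b where "b = a32 / a31"
  define c where "c = - (a11 + a21*b) / a31"
  have "a31 \<noteq> 0"
    using assms 1 by simp
  then have "unip_conj b c X $ 0 $ 0 = 0 \<and> unip_conj b c X $ 2 $ 1 = 0"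
    unfolding 1 unip_conj_mat3 b_def c_def by (simp add: field_simps)
  then show ?thesis
    using that by blast
qed

lemma unip_conj_hessenberg_normal_form:
  fixes X :: "'a::field^3^3"
  assumes "X $ 2 $ 0 = 0" and "X $ 1 $ 0 \<noteq> 0"
  obtains b c where "unip_conj b c X $ 0 $ 0 = 0" "unip_conj b c X $ 1 $ 2 = 0"
proof (cases X rule: mat3_cases)
  case (1 a11 a12 a13 a21 a22 a23 a31 a32 a33)
  define b where "b = - a11 / a21"
  define c where "c = (a21*b*b - a22*b + a23 - a32*b*b + a33*b) / a21"
  have "a31 = 0" "a21 \<noteq> 0"
    using assms 1 by simp_all
  then have "unip_conj b c X $ 0 $ 0 = 0 \<and> unip_conj b c X $ 1 $ 2 = 0"
    unfolding 1 unip_conj_mat3 b_def c_def by (simp add: field_simps)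
  then show ?thesis
    using that by blast
qed

definition trwords_agree :: "nat list set \<Rightarrow> (nat \<Rightarrow> 'a::semiring_1^'n^'n) \<Rightarrow> (nat \<Rightarrow> 'a^'n^'n) \<Rightarrow> bool" where
  "trwords_agree W X Y \<longleftrightarrow> (\<forall>w\<in>W. trword X w = trword Y w)"

lemma trwords_agreeD: "trwords_agree W X Y \<Longrightarrow> w \<in> W \<Longrightarrow> trword X w = trword Y w"
  unfolding trwords_agree_def by blast

lemma trword_triple_unip_conj:
  "trword (triple jordan3 (unip_conj b c A) (unip_conj b c C)) w = trword (triple jordan3 A C) w"
  unfolding triple_unip_conj by (rule trword_unip_conj)

lemma trwords_agree_unip_conj:
  "trwords_agree W (triple jordan3 (unip_conj b c A) (unip_conj b c C))
     (triple jordan3 (unip_conj b' c' B) (unip_conj b' c' D)) \<longleftrightarrow>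
   trwords_agree W (triple jordan3 A C) (triple jordan3 B D)"
  unfolding trwords_agree_def trword_triple_unip_conj ..

section \<open>Normal forms determined by the trace functions\<close>

lemma S33_pair_words:
  assumes "1 \<le> i" "i < j" "j \<le> 3"
  shows "[i,j] \<in> S33" "[i,i,j] \<in> S33" "[i,j,j] \<in> S33" "[i,i,j,j] \<in> S33" "[i,i,j,j,i,j] \<in> S33"
  unfolding S33_def using assms by (intro UnI1 CollectI exI[of _ i] exI[of _ j]; simp)+

lemma S33_square_words:
  assumes "{i,j,k} = {1,2,3::nat}"
  shows "[i,i,j,k] \<in> S33"
  unfolding S33_def using assms by blast

lemma S33_words:
  shows S33_12: "[1,2] \<in> S33" and S33_112: "[1,1,2] \<in> S33" and S33_122: "[1,2,2] \<in> S33"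
    and S33_1122: "[1,1,2,2] \<in> S33" and S33_112212: "[1,1,2,2,1,2] \<in> S33"
    and S33_13: "[1,3] \<in> S33" and S33_113: "[1,1,3] \<in> S33" and S33_133: "[1,3,3] \<in> S33"
    and S33_1133: "[1,1,3,3] \<in> S33" and S33_113313: "[1,1,3,3,1,3] \<in> S33"
    and S33_23: "[2,3] \<in> S33" and S33_223: "[2,2,3] \<in> S33" and S33_233: "[2,3,3] \<in> S33"
    and S33_2233: "[2,2,3,3] \<in> S33"
    and S33_1123: "[1,1,2,3] \<in> S33" and S33_1132: "[1,1,3,2] \<in> S33"
    and S33_2213: "[2,2,1,3] \<in> S33" and S33_2231: "[2,2,3,1] \<in> S33"
    and S33_3312: "[3,3,1,2] \<in> S33" and S33_3321: "[3,3,2,1] \<in> S33"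
    and S33_123: "[1,2,3] \<in> S33" and S33_132: "[1,3,2] \<in> S33" and S33_11213: "[1,1,2,1,3] \<in> S33"
  by (simp_all add: S33_pair_words S33_square_words insert_commute) (simp_all add: S33_def)

definition pair_invariants_agree :: "'a::comm_ring_1^3^3 \<Rightarrow> 'a^3^3 \<Rightarrow> bool" where
  "pair_invariants_agree X Y \<longleftrightarrow>
     trace (jordan3 ** X) = trace (jordan3 ** Y) \<and>
     trace (jordan3 ** jordan3 ** X) = trace (jordan3 ** jordan3 ** Y) \<and>
     trace (jordan3 ** X ** X) = trace (jordan3 ** Y ** Y) \<and>
     trace (jordan3 ** jordan3 ** X ** X) = trace (jordan3 ** jordan3 ** Y ** Y) \<and>
     trace (jordan3 ** jordan3 ** X ** X ** jordan3 ** X) =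
       trace (jordan3 ** jordan3 ** Y ** Y ** jordan3 ** Y)"

lemma S33_pair_invariants:
  assumes "trwords_agree S33 (triple jordan3 A C) (triple jordan3 B D)"
  shows "pair_invariants_agree A B" "pair_invariants_agree C D"
  using trwords_agreeD[OF assms S33_12] trwords_agreeD[OF assms S33_112]
    trwords_agreeD[OF assms S33_122] trwords_agreeD[OF assms S33_1122]
    trwords_agreeD[OF assms S33_112212] trwords_agreeD[OF assms S33_13]
    trwords_agreeD[OF assms S33_113] trwords_agreeD[OF assms S33_133]
    trwords_agreeD[OF assms S33_1133] trwords_agreeD[OF assms S33_113313]
  unfolding pair_invariants_agree_def by (simp_all add: trword_def triple_def matrix_mul_assoc)

lemma pair_invariants_agree_mat3:
  "pair_invariants_agree (mat3 a11 a12 a13 a21 a22 a23 a31 a32 a33) (mat3 b11 b12 b13 b21 b22 b23 b31 b32 b33) \<longleftrightarrow>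
   a21 + a32 = b21 + b32 \<and> a31 = b31 \<and>
   a11*a21 + a12*a31 + a21*a22 + a22*a32 + a23*a31 + a32*a33 =
     b11*b21 + b12*b31 + b21*b22 + b22*b32 + b23*b31 + b32*b33 \<and>
   a11*a31 + a21*a32 + a31*a33 = b11*b31 + b21*b32 + b31*b33 \<and>
   a11*a21*a31 + a12*a31*a31 + a21*a31*a33 + a21*a21*a32 + a22*a31*a32 + a31*a32*a33 =
     b11*b21*b31 + b12*b31*b31 + b21*b31*b33 + b21*b21*b32 + b22*b31*b32 + b31*b32*b33"
  unfolding pair_invariants_agree_def jordan3_def mat3_mult trace_mat3 by (simp add: algebra_simps)

lemma corner_normal_form_unique:
  fixes X Y :: "'a::field_char_0^3^3"
  assumes X: "X $ 0 $ 0 = 0" "X $ 2 $ 1 = 0" "X $ 2 $ 0 \<noteq> 0"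
    and Y: "Y $ 0 $ 0 = 0" "Y $ 2 $ 1 = 0"
    and nil: "nilpotent_invariants X" "nilpotent_invariants Y"
    and agree: "pair_invariants_agree X Y"
  shows "X = Y"
proof -
  obtain a12 a13 a21 a22 a23 a31 a33 where X_eq: "X = mat3 0 a12 a13 a21 a22 a23 a31 0 a33"
    using X(1,2) by (cases X rule: mat3_cases) auto
  obtain b12 b13 b21 b22 b23 b31 b33 where Y_eq: "Y = mat3 0 b12 b13 b21 b22 b23 b31 0 b33"
    using Y by (cases Y rule: mat3_cases) auto
  have a31: "a31 \<noteq> 0"
    using X(3) X_eq by simp
  note tr = agree[unfolded X_eq Y_eq pair_invariants_agree_mat3]
  note nX = nil(1)[unfolded X_eq nilpotent_invariants_mat3]
  note nY = nil(2)[unfolded Y_eq nilpotent_invariants_mat3]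
  have b31: "b31 = a31" and b21: "b21 = a21"
    using tr by simp_all
  have b33: "b33 = a33"
    using tr a31 b31 b21 by simp
  have b22: "b22 = a22"
    using nX nY b33 by algebra
  have b12: "b12 = a12"
    using tr b31 b21 b22 b33 a31 by algebra
  have b13: "b13 = a13"
    using nX nY b31 b21 b22 b33 b12 a31 by algebra
  have b23: "b23 = a23"
    using tr b31 b21 b22 b12 a31 by algebra
  show ?thesis
    unfolding X_eq Y_eq using b31 b21 b22 b33 b12 b13 b23 by simp
qed

lemma unreduced_hessenberg_normal_form_unique:
  fixes X Y :: "'a::field_char_0^3^3"
  assumes X: "X $ 0 $ 0 = 0" "X $ 1 $ 2 = 0" "X $ 2 $ 0 = 0" "X $ 1 $ 0 * X $ 2 $ 1 \<noteq> 0"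
    and Y: "Y $ 0 $ 0 = 0" "Y $ 1 $ 2 = 0" "Y $ 2 $ 0 = 0"
    and nil: "nilpotent_invariants X" "nilpotent_invariants Y"
    and agree: "pair_invariants_agree X Y"
  shows "X = Y"
proof -
  obtain a12 a13 p a22 q a33 where X_eq: "X = mat3 0 a12 a13 p a22 0 0 q a33"
    using X(1-3) by (cases X rule: mat3_cases) auto
  obtain b12 b13 p' b22 q' b33 where Y_eq: "Y = mat3 0 b12 b13 p' b22 0 0 q' b33"
    using Y by (cases Y rule: mat3_cases) auto
  have pq: "p * q \<noteq> 0"
    using X(4) X_eq by simp
  note tr = agree[unfolded X_eq Y_eq pair_invariants_agree_mat3]
  note nX = nil(1)[unfolded X_eq nilpotent_invariants_mat3]
  note nY = nil(2)[unfolded Y_eq nilpotent_invariants_mat3]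
  have pq': "p' * q' = p * q"
    using tr by algebra
  have p': "p' = p"
    using tr pq' pq by algebra
  then have q': "q' = q"
    using pq pq' by simp
  have a33: "a33 = - a22" and b33: "b33 = - b22"
    using nX nY by algebra+
  have b22: "b22 = a22"
    using tr p' q' a33 b33 pq by algebra
  have b12: "b12 = a12"
    using nX nY p' q' a33 b33 b22 pq by algebra
  have b13: "b13 = a13"
    using nX nY p' q' a33 b33 b22 b12 pq by algebra
  show ?thesis
    unfolding X_eq Y_eq using p' q' a33 b33 b22 b12 b13 by simp
qed

(*
  In the names below, Y2 and Y3 are the second and third matrix of the triple (J, Y2, Y3);
  the named one is in normal form and determines the other one.
*)
lemma partner_of_corner_Y2_unique:
  fixes A C D :: "'a::field_char_0^3^3"
  assumes A: "A $ 0 $ 0 = 0" "A $ 2 $ 1 = 0" "A $ 2 $ 0 \<noteq> 0"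
    and nil: "nilpotent_invariants C" "nilpotent_invariants D"
    and agree: "trwords_agree S33 (triple jordan3 A C) (triple jordan3 A D)"
  shows "C = D"
proof -
  obtain a12 a13 a21 a22 a23 a31 a33 where A_eq: "A = mat3 0 a12 a13 a21 a22 a23 a31 0 a33"
    using A(1,2) by (cases A rule: mat3_cases) auto
  obtain c11 c12 c13 c21 c22 c23 c31 c32 c33 where C_eq: "C = mat3 c11 c12 c13 c21 c22 c23 c31 c32 c33"
    by (rule mat3_cases)
  obtain d11 d12 d13 d21 d22 d23 d31 d32 d33 where D_eq: "D = mat3 d11 d12 d13 d21 d22 d23 d31 d32 d33"
    by (rule mat3_cases)
  have a31: "a31 \<noteq> 0"
    using A(3) A_eq by simp
  note tr = trwords_agreeD[OF agree[unfolded A_eq C_eq D_eq]]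
  have d31: "d31 = c31"
    using tr[OF S33_113] unfolding trword_mat3_expand by simp
  have d21: "d21 = c21"
    using tr[OF S33_11213] d31 a31 unfolding trword_mat3_expand by algebra
  have d32: "d32 = c32"
    using tr[OF S33_13] d21 unfolding trword_mat3_expand by simp
  have d11: "d11 = c11"
    using tr[OF S33_1123] d31 d21 d32 a31 unfolding trword_mat3_expand by algebra
  have d33: "d33 = c33"
    using tr[OF S33_1132] d31 d21 d32 d11 a31 unfolding trword_mat3_expand by algebra
  have d22: "d22 = c22"
    using nil d11 d33 unfolding C_eq D_eq nilpotent_invariants_mat3 by algebra
  have d12: "d12 = c12"
    using tr[OF S33_123] d31 d21 d32 d11 d22 d33 a31 unfolding trword_mat3_expand by algebra
  have d23: "d23 = c23"
    using tr[OF S33_132] d31 d21 d32 d11 d22 d33 d12 a31 unfolding trword_mat3_expand by algebra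
  have d13: "d13 = c13"
    using tr[OF S33_23] d31 d21 d32 d11 d22 d33 d12 d23 a31 unfolding trword_mat3_expand by algebra
  show ?thesis
    unfolding C_eq D_eq using d11 d12 d13 d21 d22 d23 d31 d32 d33 by simp
qed

lemma partner_of_corner_Y3_unique:
  fixes A B C :: "'a::field_char_0^3^3"
  assumes C: "C $ 0 $ 0 = 0" "C $ 2 $ 1 = 0" "C $ 2 $ 0 \<noteq> 0"
    and nil: "nilpotent_invariants A" "nilpotent_invariants B"
    and agree: "trwords_agree S33 (triple jordan3 A C) (triple jordan3 B C)"
  shows "A = B"
proof -
  obtain c12 c13 c21 c22 c23 c31 c33 where C_eq: "C = mat3 0 c12 c13 c21 c22 c23 c31 0 c33"
    using C(1,2) by (cases C rule: mat3_cases) auto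
  obtain a11 a12 a13 a21 a22 a23 a31 a32 a33 where A_eq: "A = mat3 a11 a12 a13 a21 a22 a23 a31 a32 a33"
    by (rule mat3_cases)
  obtain b11 b12 b13 b21 b22 b23 b31 b32 b33 where B_eq: "B = mat3 b11 b12 b13 b21 b22 b23 b31 b32 b33"
    by (rule mat3_cases)
  have c31: "c31 \<noteq> 0"
    using C(3) C_eq by simp
  note tr = trwords_agreeD[OF agree[unfolded A_eq B_eq C_eq]]
  have b31: "b31 = a31"
    using tr[OF S33_112] unfolding trword_mat3_expand by simp
  have b32: "b32 = a32"
    using tr[OF S33_11213] b31 c31 unfolding trword_mat3_expand by algebra
  have b21: "b21 = a21"
    using tr[OF S33_12] b32 unfolding trword_mat3_expand by simp
  have b33: "b33 = a33"
    using tr[OF S33_1123] b31 b21 b32 c31 unfolding trword_mat3_expand by algebra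
  have b11: "b11 = a11"
    using tr[OF S33_1132] b31 b21 b32 b33 c31 unfolding trword_mat3_expand by algebra
  have b22: "b22 = a22"
    using nil b11 b33 unfolding A_eq B_eq nilpotent_invariants_mat3 by algebra
  have b23: "b23 = a23"
    using tr[OF S33_123] b31 b21 b32 b11 b22 b33 c31 unfolding trword_mat3_expand by algebra
  have b12: "b12 = a12"
    using tr[OF S33_132] b31 b21 b32 b11 b22 b33 b23 c31 unfolding trword_mat3_expand by algebra
  have b13: "b13 = a13"
    using tr[OF S33_23] b31 b21 b32 b11 b22 b33 b23 b12 c31 unfolding trword_mat3_expand by algebra
  show ?thesis
    unfolding A_eq B_eq using b11 b12 b13 b21 b22 b23 b31 b32 b33 by simp
qed

lemma diagonal_shift_zero:
  fixes p q x y z :: "'a::field_char_0"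
  assumes p: "p \<noteq> 0" and sum: "x + y + z = 0" and L1: "p*x + q*y = 0" and L2: "p*y + q*z = 0"
    and L3: "p*p - p*q + q*q \<noteq> 0 \<or> p*x + q*z = 0"
  shows "x = 0 \<and> y = 0 \<and> z = 0"
proof -
  from L3 have "y = 0"
  proof
    assume "p*p - p*q + q*q \<noteq> 0"
    moreover have "(p*p - p*q + q*q) * y = 0"
      using sum L1 L2 by algebra
    ultimately show "y = 0"
      by simp
  next
    assume "p*x + q*z = 0"
    then have "3 * p * y = 0"
      using sum L1 L2 by algebra
    then show "y = 0"
      using p by simp
  qed
  then show ?thesis
    using p sum L1 by simp
qed

(*
  The singular case of diagonal_shift_zero: w = -p/q is a primitive cube root of unity and
  (d11, d22, d33) - (c11, c22, c33) is a multiple of (1, w, w^2); the remaining trace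
  identities rule out a nonzero multiple.
*)
lemma cube_root_diagonal_shift_zero:
  fixes p q c11 c12 c13 c21 c22 c23 c32 c33 d11 d22 d33 :: "'a::field_char_0"
  assumes q: "q \<noteq> 0" and root: "p*p - p*q + q*q = 0"
    and L1: "p*(d11 - c11) + q*(d22 - c22) = 0" and L2: "p*(d22 - c22) + q*(d33 - c33) = 0"
    and H1: "c21*(d11 + d22 - c11 - c22) + c32*(d22 + d33 - c22 - c33) = 0"
    and H2: "p*c12*(d11 + d22 - c11 - c22) + q*c23*(d22 + d33 - c22 - c33) = 0"
    and H3: "p*q*c13*(d11 + d33 - c11 - c33) = 0"
    and H4: "p*(d22*d22 - c22*c22) + q*(d33*d33 - c33*c33) = 0"
    and squares: "d11*d11 + d22*d22 + d33*d33 = c11*c11 + c22*c22 + c33*c33"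
    and trC: "c11 + c22 + c33 = 0"
    and detC: "c11*c22*c33 + c13*c21*c32 - c11*c23*c32 - c12*c21*c33 = 0"
  shows "d11 = c11 \<and> d22 = c22 \<and> d33 = c33"
proof -
  define w where "w = - p / q"
  have p: "p = - (w*q)"
    using q by (simp add: w_def)
  have w: "w*w + w + 1 = 0"
    using root p q by algebra
  define t where "t = d11 - c11"
  have d11: "d11 = c11 + t"
    by (simp add: t_def)
  have d22: "d22 = c22 + w*t"
    using L1 p q d11 by algebra
  have d33: "d33 = c33 + w*w*t"
    using L2 p q d22 by algebra
  have "t = 0"
  proof (rule ccontr)
    assume t: "t \<noteq> 0"
    have "w * (1 + w) = - 1"
      using w by algebra
    then have "1 + w \<noteq> 0"
      by auto
    have c32: "c32 = (1 + w)*c21"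
      using H1 d11 d22 d33 w t by algebra
    have c23: "c23 = c12"
      using H2 d11 d22 d33 w p t q by algebra
    have c13: "c13 = 0"
      using H3 d11 d22 d33 w p t q \<open>1 + w \<noteq> 0\<close> by algebra
    have "c11 + w*c22 - (1 + w)*c33 = 0"
      using squares d11 d22 d33 w t by algebra
    then have c11: "c11 = w*c33" and c22: "c22 = w*w*c33"
      using trC w by algebra+
    have "c33*c33*c33 = 0"
      using detC c32 c23 c13 c22 c11 w by algebra
    then have c33: "c33 = 0"
      by simp
    have "w = 1"
      using H4 d22 d33 w p c33 c22 q t by algebra
    then show False
      using w by simp
  qed
  then show ?thesis
    using d11 d22 d33 by simp
qed

lemma partner_of_cube_root_Y2_diagonal:
  fixes p q :: "'a::field_char_0"
  assumes q: "q \<noteq> 0" and root: "p*p - p*q + q*q = 0"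
    and nil: "nilpotent_invariants (mat3 c11 c12 c13 c21 c22 c23 0 c32 c33)"
      "nilpotent_invariants (mat3 d11 c12 d13 c21 d22 c23 0 c32 d33)"
    and agree: "trwords_agree S33
      (triple jordan3 (mat3 0 0 0 p 0 0 0 q 0) (mat3 c11 c12 c13 c21 c22 c23 0 c32 c33))
      (triple jordan3 (mat3 0 0 0 p 0 0 0 q 0) (mat3 d11 c12 d13 c21 d22 c23 0 c32 d33))"
  shows "d11 = c11 \<and> d22 = c22 \<and> d33 = c33"
proof -
  note tr = trwords_agreeD[OF agree]
  note nC = nil(1)[unfolded nilpotent_invariants_mat3]
  note nD = nil(2)[unfolded nilpotent_invariants_mat3]
  have p: "p \<noteq> 0"
    using q root by auto
  have L0: "(d11 - c11) + (d22 - c22) + (d33 - c33) = 0"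
    using nC nD by algebra
  have L1: "p*(d11 - c11) + q*(d22 - c22) = 0"
    using tr[OF S33_123] unfolding trword_mat3_expand by algebra
  have L2: "p*(d22 - c22) + q*(d33 - c33) = 0"
    using tr[OF S33_132] unfolding trword_mat3_expand by algebra
  have d13: "d13 = c13"
    using tr[OF S33_223] L0 L1 L2 p q unfolding trword_mat3_expand by algebra
  show ?thesis
  proof (rule cube_root_diagonal_shift_zero[OF q root L1 L2])
    show "c21*(d11 + d22 - c11 - c22) + c32*(d22 + d33 - c22 - c33) = 0"
      using tr[OF S33_133] unfolding trword_mat3_expand by algebra
    show "p*c12*(d11 + d22 - c11 - c22) + q*c23*(d22 + d33 - c22 - c33) = 0"
      using tr[OF S33_233] d13 unfolding trword_mat3_expand by algebra
    show "p*q*c13*(d11 + d33 - c11 - c33) = 0"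
      using tr[OF S33_2233] d13 unfolding trword_mat3_expand by algebra
    show "p*(d22*d22 - c22*c22) + q*(d33*d33 - c33*c33) = 0"
      using tr[OF S33_3321] d13 unfolding trword_mat3_expand by algebra
    show "d11*d11 + d22*d22 + d33*d33 = c11*c11 + c22*c22 + c33*c33"
      using nC nD by algebra
    show "c11 + c22 + c33 = 0"
      using nC by simp
    show "c11*c22*c33 + c13*c21*c32 - c11*c23*c32 - c12*c21*c33 = 0"
      using nC by simp
  qed
qed

lemma partner_of_hessenberg_Y2_unique:
  fixes A C D :: "'a::field_char_0^3^3"
  assumes A: "A $ 0 $ 0 = 0" "A $ 1 $ 2 = 0" "A $ 2 $ 0 = 0" "A $ 1 $ 0 * A $ 2 $ 1 \<noteq> 0"
    and CD: "C $ 2 $ 0 = 0" "D $ 2 $ 0 = 0"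
    and nil: "nilpotent_invariants A" "nilpotent_invariants C" "nilpotent_invariants D"
    and agree: "trwords_agree S33 (triple jordan3 A C) (triple jordan3 A D)"
  shows "C = D"
proof -
  obtain a12 a13 p a22 q a33 where A_eq: "A = mat3 0 a12 a13 p a22 0 0 q a33"
    using A(1-3) by (cases A rule: mat3_cases) auto
  obtain c11 c12 c13 c21 c22 c23 c32 c33 where C_eq: "C = mat3 c11 c12 c13 c21 c22 c23 0 c32 c33"
    using CD(1) by (cases C rule: mat3_cases) auto
  obtain d11 d12 d13 d21 d22 d23 d32 d33 where D_eq: "D = mat3 d11 d12 d13 d21 d22 d23 0 d32 d33"
    using CD(2) by (cases D rule: mat3_cases) auto
  have p: "p \<noteq> 0" and q: "q \<noteq> 0"
    using A(4) A_eq by simp_all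
  note tr = trwords_agreeD[OF agree[unfolded A_eq C_eq D_eq]]
  note nA = nil(1)[unfolded A_eq nilpotent_invariants_mat3]
  note nC = nil(2)[unfolded C_eq nilpotent_invariants_mat3]
  note nD = nil(3)[unfolded D_eq nilpotent_invariants_mat3]
  have a33: "a33 = - a22"
    using nA by algebra
  have d32: "d32 = c32"
    using tr[OF S33_1132] p unfolding trword_mat3_expand by algebra
  have d21: "d21 = c21"
    using tr[OF S33_13] d32 unfolding trword_mat3_expand by simp
  have L4: "q * (d23 - c23) + a22 * (d22 - c22) = 0"
    using tr[OF S33_2213] d32 d21 a33 p unfolding trword_mat3_expand by algebra
  have L5: "q * (d12 - c12) + a22 * (d11 - c11) = 0"
    using tr[OF S33_2231] d32 d21 a33 p unfolding trword_mat3_expand by algebra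
  have L0: "(d11 - c11) + (d22 - c22) + (d33 - c33) = 0"
    using nC nD by algebra
  have L1: "p * (d11 - c11) + q * (d22 - c22) = 0"
    using tr[OF S33_123] d32 d21 unfolding trword_mat3_expand by algebra
  have L2: "p * (d22 - c22) + q * (d33 - c33) = 0"
    using tr[OF S33_132] d32 d21 unfolding trword_mat3_expand by algebra
  have L3: "a22 * (p * (d11 - c11) + q * (d33 - c33)) = 0"
    using tr[OF S33_23] d32 d21 a33 L4 L5 q unfolding trword_mat3_expand by algebra
  have diag: "d11 = c11 \<and> d22 = c22 \<and> d33 = c33"
  proof (cases "a22 = 0 \<and> p*p - p*q + q*q = 0")
    case True
    have a12: "a12 = 0"
      using nA True a33 p by algebra
    have a13: "a13 = 0"
      using nA True a33 a12 p q by algebra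
    have "d12 = c12" "d23 = c23"
      using L4 L5 True q by simp_all
    then show ?thesis
      using partner_of_cube_root_Y2_diagonal[of q p] True q nil(2,3) agree
      unfolding A_eq C_eq D_eq a33 a12 a13 d32 d21 by simp
  next
    case False
    then have "p*p - p*q + q*q \<noteq> 0 \<or> p * (d11 - c11) + q * (d33 - c33) = 0"
      using L3 by auto
    then show ?thesis
      using diagonal_shift_zero[OF p L0 L1 L2] by simp
  qed
  then have "d12 = c12" "d23 = c23"
    using L4 L5 q by simp_all
  moreover have "p * q * (d13 - c13) = 0"
    using tr[OF S33_223] d32 d21 a33 diag calculation unfolding trword_mat3_expand by algebra
  ultimately show ?thesis
    unfolding C_eq D_eq using p q d32 d21 diag by simp
qed

lemma partner_of_cube_root_Y3_diagonal:
  fixes p q :: "'a::field_char_0"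
  assumes q: "q \<noteq> 0" and root: "p*p - p*q + q*q = 0"
    and nil: "nilpotent_invariants (mat3 a11 a12 a13 a21 a22 a23 0 a32 a33)"
      "nilpotent_invariants (mat3 b11 a12 b13 a21 b22 a23 0 a32 b33)"
    and agree: "trwords_agree S33
      (triple jordan3 (mat3 a11 a12 a13 a21 a22 a23 0 a32 a33) (mat3 0 0 0 p 0 0 0 q 0))
      (triple jordan3 (mat3 b11 a12 b13 a21 b22 a23 0 a32 b33) (mat3 0 0 0 p 0 0 0 q 0))"
  shows "b11 = a11 \<and> b22 = a22 \<and> b33 = a33"
proof -
  note tr = trwords_agreeD[OF agree]
  note nA = nil(1)[unfolded nilpotent_invariants_mat3]
  note nB = nil(2)[unfolded nilpotent_invariants_mat3]
  have p: "p \<noteq> 0"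
    using q root by auto
  have L0: "(b11 - a11) + (b22 - a22) + (b33 - a33) = 0"
    using nA nB by algebra
  have L1: "p*(b11 - a11) + q*(b22 - a22) = 0"
    using tr[OF S33_132] unfolding trword_mat3_expand by algebra
  have L2: "p*(b22 - a22) + q*(b33 - a33) = 0"
    using tr[OF S33_123] unfolding trword_mat3_expand by algebra
  have b13: "b13 = a13"
    using tr[OF S33_233] L0 L1 L2 p q unfolding trword_mat3_expand by algebra
  show ?thesis
  proof (rule cube_root_diagonal_shift_zero[OF q root L1 L2])
    show "a21*(b11 + b22 - a11 - a22) + a32*(b22 + b33 - a22 - a33) = 0"
      using tr[OF S33_122] unfolding trword_mat3_expand by algebra
    show "p*a12*(b11 + b22 - a11 - a22) + q*a23*(b22 + b33 - a22 - a33) = 0"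
      using tr[OF S33_223] b13 unfolding trword_mat3_expand by algebra
    show "p*q*a13*(b11 + b33 - a11 - a33) = 0"
      using tr[OF S33_2233] b13 unfolding trword_mat3_expand by algebra
    show "p*(b22*b22 - a22*a22) + q*(b33*b33 - a33*a33) = 0"
      using tr[OF S33_2231] b13 unfolding trword_mat3_expand by algebra
    show "b11*b11 + b22*b22 + b33*b33 = a11*a11 + a22*a22 + a33*a33"
      using nA nB by algebra
    show "a11 + a22 + a33 = 0"
      using nA by simp
    show "a11*a22*a33 + a13*a21*a32 - a11*a23*a32 - a12*a21*a33 = 0"
      using nA by simp
  qed
qed

lemma partner_of_hessenberg_Y3_unique:
  fixes A B C :: "'a::field_char_0^3^3"
  assumes C: "C $ 0 $ 0 = 0" "C $ 1 $ 2 = 0" "C $ 2 $ 0 = 0" "C $ 1 $ 0 * C $ 2 $ 1 \<noteq> 0"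
    and AB: "A $ 2 $ 0 = 0" "B $ 2 $ 0 = 0"
    and nil: "nilpotent_invariants A" "nilpotent_invariants B" "nilpotent_invariants C"
    and agree: "trwords_agree S33 (triple jordan3 A C) (triple jordan3 B C)"
  shows "A = B"
proof -
  obtain c12 c13 p c22 q c33 where C_eq: "C = mat3 0 c12 c13 p c22 0 0 q c33"
    using C(1-3) by (cases C rule: mat3_cases) auto
  obtain a11 a12 a13 a21 a22 a23 a32 a33 where A_eq: "A = mat3 a11 a12 a13 a21 a22 a23 0 a32 a33"
    using AB(1) by (cases A rule: mat3_cases) auto
  obtain b11 b12 b13 b21 b22 b23 b32 b33 where B_eq: "B = mat3 b11 b12 b13 b21 b22 b23 0 b32 b33"
    using AB(2) by (cases B rule: mat3_cases) auto
  have p: "p \<noteq> 0" and q: "q \<noteq> 0"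
    using C(4) C_eq by simp_all
  note tr = trwords_agreeD[OF agree[unfolded A_eq B_eq C_eq]]
  note nA = nil(1)[unfolded A_eq nilpotent_invariants_mat3]
  note nB = nil(2)[unfolded B_eq nilpotent_invariants_mat3]
  note nC = nil(3)[unfolded C_eq nilpotent_invariants_mat3]
  have c33: "c33 = - c22"
    using nC by algebra
  have b32: "b32 = a32"
    using tr[OF S33_1123] p unfolding trword_mat3_expand by algebra
  have b21: "b21 = a21"
    using tr[OF S33_12] b32 unfolding trword_mat3_expand by simp
  have L4: "q * (b23 - a23) + c22 * (b22 - a22) = 0"
    using tr[OF S33_3312] b32 b21 c33 p unfolding trword_mat3_expand by algebra
  have L5: "q * (b12 - a12) + c22 * (b11 - a11) = 0"
    using tr[OF S33_3321] b32 b21 c33 p unfolding trword_mat3_expand by algebra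
  have L0: "(b11 - a11) + (b22 - a22) + (b33 - a33) = 0"
    using nA nB by algebra
  have L1: "p * (b11 - a11) + q * (b22 - a22) = 0"
    using tr[OF S33_132] b32 b21 unfolding trword_mat3_expand by algebra
  have L2: "p * (b22 - a22) + q * (b33 - a33) = 0"
    using tr[OF S33_123] b32 b21 unfolding trword_mat3_expand by algebra
  have L3: "c22 * (p * (b11 - a11) + q * (b33 - a33)) = 0"
    using tr[OF S33_23] b32 b21 c33 L4 L5 q unfolding trword_mat3_expand by algebra
  have diag: "b11 = a11 \<and> b22 = a22 \<and> b33 = a33"
  proof (cases "c22 = 0 \<and> p*p - p*q + q*q = 0")
    case True
    have c12: "c12 = 0"
      using nC True c33 p by algebra
    have c13: "c13 = 0"
      using nC True c33 c12 p q by algebra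
    have "b12 = a12" "b23 = a23"
      using L4 L5 True q by simp_all
    then show ?thesis
      using partner_of_cube_root_Y3_diagonal[of q p] True q nil(1,2) agree
      unfolding A_eq B_eq C_eq c33 c12 c13 b32 b21 by simp
  next
    case False
    then have "p*p - p*q + q*q \<noteq> 0 \<or> p * (b11 - a11) + q * (b33 - a33) = 0"
      using L3 by auto
    then show ?thesis
      using diagonal_shift_zero[OF p L0 L1 L2] by simp
  qed
  then have "b12 = a12" "b23 = a23"
    using L4 L5 q by simp_all
  moreover have "p * q * (b13 - a13) = 0"
    using tr[OF S33_233] b32 b21 c33 diag calculation unfolding trword_mat3_expand by algebra
  ultimately show ?thesis
    unfolding A_eq B_eq using p q b32 b21 diag by simp
qed

section \<open>Triples in reduced Hessenberg form\<close>

lemma nilpotent_reduced_hessenberg_cases: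
  fixes X :: "'a::field_char_0^3^3"
  assumes "nilpotent_invariants X" "X $ 2 $ 0 = 0" "X $ 1 $ 0 * X $ 2 $ 1 = 0"
  obtains (first_column_zero) x12 x13 x22 x23 x32
    where "X = mat3 0 x12 x13 0 x22 x23 0 x32 (- x22)" "x22*x22 + x23*x32 = 0"
  | (last_row_zero) x11 x12 x13 x21 x23
    where "X = mat3 x11 x12 x13 x21 (- x11) x23 0 0 0" "x11*x11 + x12*x21 = 0"
proof (cases X rule: mat3_cases)
  case (1 x11 x12 x13 x21 x22 x23 x31 x32 x33)
  note nX = assms(1)[unfolded 1 nilpotent_invariants_mat3]
  have x31: "x31 = 0" and "x21 * x32 = 0"
    using assms(2,3) 1 by simp_all
  then consider "x21 = 0" | "x32 = 0"
    by auto
  then show ?thesis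
  proof cases
    case 1
    then have "x11 = 0"
      using nX x31 by algebra
    moreover have "x33 = - x22"
      using nX x31 1 \<open>x11 = 0\<close> by algebra
    moreover have "x22*x22 + x23*x32 = 0"
      using nX x31 1 \<open>x11 = 0\<close> by algebra
    ultimately show ?thesis
      using first_column_zero \<open>X = _\<close> x31 1 by simp
  next
    case 2
    then have "x33 = 0"
      using nX x31 by algebra
    moreover have "x22 = - x11"
      using nX x31 2 \<open>x33 = 0\<close> by algebra
    moreover have "x11*x11 + x12*x21 = 0"
      using nX x31 2 \<open>x33 = 0\<close> by algebra
    ultimately show ?thesis
      using last_row_zero \<open>X = _\<close> x31 2 by simp
  qed
qed

lemma permutation_of_123:
  assumes "{i, j, k} = {1, 2, 3::nat}"
  shows "(i = 1 \<and> j = 2 \<and> k = 3) \<or> (i = 1 \<and> j = 3 \<and> k = 2) \<or> (i = 2 \<and> j = 1 \<and> k = 3) \<or>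
    (i = 2 \<and> j = 3 \<and> k = 1) \<or> (i = 3 \<and> j = 1 \<and> k = 2) \<or> (i = 3 \<and> j = 2 \<and> k = 1)"
proof -
  have "i \<in> {1,2,3}" "j \<in> {1,2,3}" "k \<in> {1,2,3}" "1 \<in> {i,j,k}" "2 \<in> {i,j,k}" "3 \<in> {i,j,k}"
    using assms by blast+
  then have "i = 1 \<or> i = 2 \<or> i = 3" "j = 1 \<or> j = 2 \<or> j = 3" "k = 1 \<or> k = 2 \<or> k = 3"
    "1 = i \<or> 1 = j \<or> 1 = k" "2 = i \<or> 2 = j \<or> 2 = k" "3 = i \<or> 3 = j \<or> 3 = k"
    by auto
  then show ?thesis
    by presburger
qed

lemma P33'_cases:
  assumes "w \<in> P33'"
    and "P [1,1,2,2,3]" "P [1,1,3,3,2]" "P [2,2,1,1,3]" "P [2,2,3,3,1]" "P [3,3,1,1,2]" "P [3,3,2,2,1]"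
    and "P [1,1,2,2,1,3]" "P [1,1,3,3,1,2]" "P [2,2,1,1,2,3]" "P [2,2,3,3,2,1]" "P [3,3,1,1,3,2]"
    and "P [3,3,2,2,3,1]" "P [1,1,2,2,3,3]"
  shows "P w"
proof -
  consider "w = [1,1,2,2,3,3]"
    | i j k where "{i, j, k} = {1, 2, 3::nat}" "w = [i,i,j,j,k] \<or> w = [i,i,j,j,i,k]"
    using assms(1) unfolding P33'_def by blast
  then show ?thesis
  proof cases
    case 1
    then show ?thesis
      using assms by simp
  next
    case (2 i j k)
    from permutation_of_123[OF 2(1)] 2(2) show ?thesis
      using assms(2-) by (elim disjE conjE) simp_all
  qed
qed

lemmas ring_zero_one_simps =
  mult_zero_left mult_zero_right add_0_left add_0_right mult_1_left mult_1_right diff_0 diff_0_right minus_zero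

lemma trword_P33'_reduced_hessenberg:
  fixes A C :: "'a::field_char_0^3^3"
  assumes "nilpotent_invariants A" "A $ 2 $ 0 = 0" "A $ 1 $ 0 * A $ 2 $ 1 = 0"
    and "nilpotent_invariants C" "C $ 2 $ 0 = 0" "C $ 1 $ 0 * C $ 2 $ 1 = 0"
    and w: "w \<in> P33'"
  shows "trword (triple jordan3 A C) w = 0"
proof -
  note word_cases = P33'_cases[OF w, of "\<lambda>w. trword (triple jordan3 A C) w = 0"]
  from assms(1-3) show ?thesis
  proof (cases rule: nilpotent_reduced_hessenberg_cases)
    case A: (first_column_zero a12 a13 a22 a23 a32)
    from assms(4-6) show ?thesis
    proof (cases rule: nilpotent_reduced_hessenberg_cases)
      case C: (first_column_zero c12 c13 c22 c23 c32)
      show ?thesis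
        by (rule word_cases; simp only: A(1) C(1) trword_mat3_expand ring_zero_one_simps)
          (algebra | use A(2) C(2) in algebra)+
    next
      case C: (last_row_zero c11 c12 c13 c21 c23)
      show ?thesis
        by (rule word_cases; simp only: A(1) C(1) trword_mat3_expand ring_zero_one_simps)
          (algebra | use A(2) C(2) in algebra)+
    qed
  next
    case A: (last_row_zero a11 a12 a13 a21 a23)
    from assms(4-6) show ?thesis
    proof (cases rule: nilpotent_reduced_hessenberg_cases)
      case C: (first_column_zero c12 c13 c22 c23 c32)
      show ?thesis
        by (rule word_cases; simp only: A(1) C(1) trword_mat3_expand ring_zero_one_simps)
          (algebra | use A(2) C(2) in algebra)+
    next
      case C: (last_row_zero c11 c12 c13 c21 c23)
      show ?thesis
        by (rule word_cases; simp only: A(1) C(1) trword_mat3_expand ring_zero_one_simps)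
          (algebra | use A(2) C(2) in algebra)+
    qed
  qed
qed

lemma trword_eq_if_unip_conj_eq:
  assumes "unip_conj b c A = unip_conj b' c' B" "unip_conj b c C = unip_conj b' c' D"
  shows "trword (triple jordan3 A C) w = trword (triple jordan3 B D) w"
  by (metis assms trword_triple_unip_conj)

lemma trword_jordan_words:
  fixes A C :: "'a::comm_ring_1^3^3"
  shows trword_112: "trword (triple jordan3 A C) [1,1,2] = A $ 2 $ 0"
    and trword_113: "trword (triple jordan3 A C) [1,1,3] = C $ 2 $ 0"
    and trword_1122: "A $ 2 $ 0 = 0 \<Longrightarrow> trword (triple jordan3 A C) [1,1,2,2] = A $ 1 $ 0 * A $ 2 $ 1"
    and trword_1133: "C $ 2 $ 0 = 0 \<Longrightarrow> trword (triple jordan3 A C) [1,1,3,3] = C $ 1 $ 0 * C $ 2 $ 1"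
  by (cases A rule: mat3_cases; cases C rule: mat3_cases; simp add: trword_mat3_expand triple_def)+

lemma trword_eq_if_corner_Y2:
  fixes A B C D :: "'a::field_char_0^3^3"
  assumes nil: "nilpotent_invariants A" "nilpotent_invariants B" "nilpotent_invariants C" "nilpotent_invariants D"
    and agree: "trwords_agree S33 (triple jordan3 A C) (triple jordan3 B D)"
    and corner: "A $ 2 $ 0 \<noteq> 0"
  shows "trword (triple jordan3 A C) w = trword (triple jordan3 B D) w"
proof -
  have "B $ 2 $ 0 \<noteq> 0"
    using trwords_agreeD[OF agree S33_112] corner unfolding trword_112 by simp
  obtain b c where A': "unip_conj b c A $ 0 $ 0 = 0" "unip_conj b c A $ 2 $ 1 = 0"
    using corner by (rule unip_conj_corner_normal_form)
  obtain b' c' where B': "unip_conj b' c' B $ 0 $ 0 = 0" "unip_conj b' c' B $ 2 $ 1 = 0"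
    using \<open>B $ 2 $ 0 \<noteq> 0\<close> by (rule unip_conj_corner_normal_form)
  note agree' = agree[folded trwords_agree_unip_conj[of _ b c A C b' c' B D]]
  have AB: "unip_conj b c A = unip_conj b' c' B"
    by (rule corner_normal_form_unique[OF A' _ B' _ _ S33_pair_invariants(1)[OF agree']])
      (simp_all add: corner nil nilpotent_invariants_unip_conj)
  moreover have "unip_conj b c C = unip_conj b' c' D"
    by (rule partner_of_corner_Y2_unique[OF A' _ _ _ agree'[folded AB]])
      (simp_all add: corner nil nilpotent_invariants_unip_conj)
  ultimately show ?thesis
    by (rule trword_eq_if_unip_conj_eq)
qed

lemma trword_eq_if_corner_Y3:
  fixes A B C D :: "'a::field_char_0^3^3"
  assumes nil: "nilpotent_invariants A" "nilpotent_invariants B" "nilpotent_invariants C" "nilpotent_invariants D"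
    and agree: "trwords_agree S33 (triple jordan3 A C) (triple jordan3 B D)"
    and corner: "C $ 2 $ 0 \<noteq> 0"
  shows "trword (triple jordan3 A C) w = trword (triple jordan3 B D) w"
proof -
  have "D $ 2 $ 0 \<noteq> 0"
    using trwords_agreeD[OF agree S33_113] corner unfolding trword_113 by simp
  obtain b c where C': "unip_conj b c C $ 0 $ 0 = 0" "unip_conj b c C $ 2 $ 1 = 0"
    using corner by (rule unip_conj_corner_normal_form)
  obtain b' c' where D': "unip_conj b' c' D $ 0 $ 0 = 0" "unip_conj b' c' D $ 2 $ 1 = 0"
    using \<open>D $ 2 $ 0 \<noteq> 0\<close> by (rule unip_conj_corner_normal_form)
  note agree' = agree[folded trwords_agree_unip_conj[of _ b c A C b' c' B D]]
  have CD: "unip_conj b c C = unip_conj b' c' D"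
    by (rule corner_normal_form_unique[OF C' _ D' _ _ S33_pair_invariants(2)[OF agree']])
      (simp_all add: corner nil nilpotent_invariants_unip_conj)
  have "unip_conj b c A = unip_conj b' c' B"
    by (rule partner_of_corner_Y3_unique[OF C' _ _ _ agree'[folded CD]])
      (simp_all add: corner nil nilpotent_invariants_unip_conj)
  then show ?thesis
    using CD by (rule trword_eq_if_unip_conj_eq)
qed

lemma trword_eq_if_unreduced_hessenberg_Y2:
  fixes A B C D :: "'a::field_char_0^3^3"
  assumes nil: "nilpotent_invariants A" "nilpotent_invariants B" "nilpotent_invariants C" "nilpotent_invariants D"
    and agree: "trwords_agree S33 (triple jordan3 A C) (triple jordan3 B D)"
    and hess: "A $ 2 $ 0 = 0" "C $ 2 $ 0 = 0" "A $ 1 $ 0 * A $ 2 $ 1 \<noteq> 0"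
  shows "trword (triple jordan3 A C) w = trword (triple jordan3 B D) w"
proof -
  have B20: "B $ 2 $ 0 = 0" and D20: "D $ 2 $ 0 = 0"
    using trwords_agreeD[OF agree S33_112] trwords_agreeD[OF agree S33_113] hess
    unfolding trword_112 trword_113 by simp_all
  have "B $ 1 $ 0 * B $ 2 $ 1 \<noteq> 0"
    using trwords_agreeD[OF agree S33_1122] hess
    unfolding trword_1122[OF hess(1)] trword_1122[OF B20] by simp
  then have subdiag: "A $ 1 $ 0 \<noteq> 0" "A $ 2 $ 1 \<noteq> 0" "B $ 1 $ 0 \<noteq> 0"
    using hess by simp_all
  obtain b c where A': "unip_conj b c A $ 0 $ 0 = 0" "unip_conj b c A $ 1 $ 2 = 0"
    using hess(1) \<open>A $ 1 $ 0 \<noteq> 0\<close> by (rule unip_conj_hessenberg_normal_form)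
  obtain b' c' where B': "unip_conj b' c' B $ 0 $ 0 = 0" "unip_conj b' c' B $ 1 $ 2 = 0"
    using B20 \<open>B $ 1 $ 0 \<noteq> 0\<close> by (rule unip_conj_hessenberg_normal_form)
  note agree' = agree[folded trwords_agree_unip_conj[of _ b c A C b' c' B D]]
  have AB: "unip_conj b c A = unip_conj b' c' B"
    by (rule unreduced_hessenberg_normal_form_unique[OF A' _ _ B' _ _ _ S33_pair_invariants(1)[OF agree']])
      (simp_all add: hess B20 subdiag unip_conj_subdiagonal nil nilpotent_invariants_unip_conj)
  moreover have "unip_conj b c C = unip_conj b' c' D"
    by (rule partner_of_hessenberg_Y2_unique[OF A' _ _ _ _ _ _ _ agree'[folded AB]])
      (simp_all add: hess D20 subdiag unip_conj_subdiagonal nil nilpotent_invariants_unip_conj)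
  ultimately show ?thesis
    by (rule trword_eq_if_unip_conj_eq)
qed

lemma trword_eq_if_unreduced_hessenberg_Y3:
  fixes A B C D :: "'a::field_char_0^3^3"
  assumes nil: "nilpotent_invariants A" "nilpotent_invariants B" "nilpotent_invariants C" "nilpotent_invariants D"
    and agree: "trwords_agree S33 (triple jordan3 A C) (triple jordan3 B D)"
    and hess: "A $ 2 $ 0 = 0" "C $ 2 $ 0 = 0" "C $ 1 $ 0 * C $ 2 $ 1 \<noteq> 0"
  shows "trword (triple jordan3 A C) w = trword (triple jordan3 B D) w"
proof -
  have B20: "B $ 2 $ 0 = 0" and D20: "D $ 2 $ 0 = 0"
    using trwords_agreeD[OF agree S33_112] trwords_agreeD[OF agree S33_113] hess
    unfolding trword_112 trword_113 by simp_all
  have "D $ 1 $ 0 * D $ 2 $ 1 \<noteq> 0"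
    using trwords_agreeD[OF agree S33_1133] hess
    unfolding trword_1133[OF hess(2)] trword_1133[OF D20] by simp
  then have subdiag: "C $ 1 $ 0 \<noteq> 0" "C $ 2 $ 1 \<noteq> 0" "D $ 1 $ 0 \<noteq> 0"
    using hess by simp_all
  obtain b c where C': "unip_conj b c C $ 0 $ 0 = 0" "unip_conj b c C $ 1 $ 2 = 0"
    using hess(2) \<open>C $ 1 $ 0 \<noteq> 0\<close> by (rule unip_conj_hessenberg_normal_form)
  obtain b' c' where D': "unip_conj b' c' D $ 0 $ 0 = 0" "unip_conj b' c' D $ 1 $ 2 = 0"
    using D20 \<open>D $ 1 $ 0 \<noteq> 0\<close> by (rule unip_conj_hessenberg_normal_form)
  note agree' = agree[folded trwords_agree_unip_conj[of _ b c A C b' c' B D]]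
  have CD: "unip_conj b c C = unip_conj b' c' D"
    by (rule unreduced_hessenberg_normal_form_unique[OF C' _ _ D' _ _ _ S33_pair_invariants(2)[OF agree']])
      (simp_all add: hess D20 subdiag unip_conj_subdiagonal nil nilpotent_invariants_unip_conj)
  have "unip_conj b c A = unip_conj b' c' B"
    by (rule partner_of_hessenberg_Y3_unique[OF C' _ _ _ _ _ _ _ agree'[folded CD]])
      (simp_all add: hess B20 subdiag unip_conj_subdiagonal nil nilpotent_invariants_unip_conj)
  then show ?thesis
    using CD by (rule trword_eq_if_unip_conj_eq)
qed

lemma trwords_agree_P33_if_reduced_hessenberg:
  fixes A B C D :: "'a::field_char_0^3^3"
  assumes nil: "nilpotent_invariants A" "nilpotent_invariants B" "nilpotent_invariants C" "nilpotent_invariants D"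
    and agree: "trwords_agree S33 (triple jordan3 A C) (triple jordan3 B D)"
    and hess: "A $ 2 $ 0 = 0" "C $ 2 $ 0 = 0" "A $ 1 $ 0 * A $ 2 $ 1 = 0" "C $ 1 $ 0 * C $ 2 $ 1 = 0"
  shows "trwords_agree P33 (triple jordan3 A C) (triple jordan3 B D)"
proof -
  have B20: "B $ 2 $ 0 = 0" and D20: "D $ 2 $ 0 = 0"
    using trwords_agreeD[OF agree S33_112] trwords_agreeD[OF agree S33_113] hess
    unfolding trword_112 trword_113 by simp_all
  have "B $ 1 $ 0 * B $ 2 $ 1 = 0" "D $ 1 $ 0 * D $ 2 $ 1 = 0"
    using trwords_agreeD[OF agree S33_1122] trwords_agreeD[OF agree S33_1133] hess
    unfolding trword_1122[OF hess(1)] trword_1122[OF B20] trword_1133[OF hess(2)] trword_1133[OF D20]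
    by simp_all
  then have "trword (triple jordan3 A C) w = 0" "trword (triple jordan3 B D) w = 0" if "w \<in> P33'" for w
    using trword_P33'_reduced_hessenberg that nil hess B20 D20 by blast+
  then show ?thesis
    using agree unfolding trwords_agree_def P33_def by auto
qed

theorem lemma5p1:
  fixes A2 A3 B2 B3 :: "'a::{alg_closed_field, field_char_0}^3^3"
  defines "J2 \<equiv> matunit 1 2 + matunit 2 3"
  assumes "nilpotent_mat A2" and "nilpotent_mat A3"
      and "nilpotent_mat B2" and "nilpotent_mat B3"
      and "\<forall>w\<in>S33. trword (triple J2 A2 A3) w = trword (triple J2 B2 B3) w"
  shows "\<forall>w\<in>P33. trword (triple J2 A2 A3) w = trword (triple J2 B2 B3) w"
proof -
  have J2: "J2 = jordan3"
    unfolding J2_def by (rule matunit_12_plus_23)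
  have nil: "nilpotent_invariants A2" "nilpotent_invariants B2" "nilpotent_invariants A3" "nilpotent_invariants B3"
    using assms(2-5) by (simp_all add: nilpotent_mat_invariants)
  have agree: "trwords_agree S33 (triple jordan3 A2 A3) (triple jordan3 B2 B3)"
    using assms(6) unfolding trwords_agree_def J2 .
  have "trwords_agree P33 (triple jordan3 A2 A3) (triple jordan3 B2 B3)"
  proof (cases "A2 $ 2 $ 0 = 0 \<and> A3 $ 2 $ 0 = 0 \<and> A2 $ 1 $ 0 * A2 $ 2 $ 1 = 0 \<and> A3 $ 1 $ 0 * A3 $ 2 $ 1 = 0")
    case True
    then show ?thesis
      using trwords_agree_P33_if_reduced_hessenberg[OF nil agree] by blast
  next
    case False
    then have "trword (triple jordan3 A2 A3) w = trword (triple jordan3 B2 B3) w" for w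
      using trword_eq_if_corner_Y2[OF nil agree] trword_eq_if_corner_Y3[OF nil agree]
        trword_eq_if_unreduced_hessenberg_Y2[OF nil agree] trword_eq_if_unreduced_hessenberg_Y3[OF nil agree]
      by blast
    then show ?thesis
      unfolding trwords_agree_def by blast
  qed
  then show ?thesis
    unfolding trwords_agree_def J2 .
qed

end
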